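(* Let $G$ be a finite abelian group and let $n \in \mathbb{N}$. Let \[m= \max \{ \lfloor \lfloor \mathsf{D}(G\oplus C_n)/n \rfloor n/2 \rfloor,\ \lfloor \mathsf{D}(G)/n \rfloor n \}.\] Then $\mathsf{s}_{\le m} ( G )\le \mathsf{D} ( G \oplus C_n )$.
   Context: A sequence over a finite abelian group $H$ is a finite unordered list of elements of $H$ with repetitions; zero-sum means its terms sum to $0$. $\mathsf{D}(H)$ (the Davenport constant) is the smallest $\ell$ such that every sequence over $H$ of length at least $\ell$ has a non-empty zero-sum subsequence. For $m\in\mathbb{N}$, $\mathsf{s}_{\le m}(H)\in\mathbb{N}\cup\{\infty\}$ is the smallest $\ell$ such that every sequence over $H$ of length at least $\ell$ has a non-empty zero-sum subsequence of length at most $m$. $C_n$ is a cyclic group of order $n$. *)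

theory Defs
  imports "HOL-Algebra.Algebra" "HOL-Library.Multiset" "HOL-Library.Extended_Nat"
begin

definition seq_prod :: "('a, 'b) monoid_scheme \<Rightarrow> 'a multiset \<Rightarrow> 'a" where
  "seq_prod G S = finprod G (\<lambda>x. x [^]\<^bsub>G\<^esub> count S x) (set_mset S)"

definition zero_sum :: "('a, 'b) monoid_scheme \<Rightarrow> 'a multiset \<Rightarrow> bool" where
  "zero_sum G S \<longleftrightarrow> seq_prod G S = \<one>\<^bsub>G\<^esub>"

definition is_seq :: "('a, 'b) monoid_scheme \<Rightarrow> 'a multiset \<Rightarrow> bool" where
  "is_seq G S \<longleftrightarrow> set_mset S \<subseteq> carrier G"

definition davenport :: "('a, 'b) monoid_scheme \<Rightarrow> nat" where
  "davenport G = (LEAST l. \<forall>S. is_seq G S \<and> size S \<ge> l \<longrightarrow>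
       (\<exists>T. T \<subseteq># S \<and> T \<noteq> {#} \<and> zero_sum G T))"

definition s_le :: "nat \<Rightarrow> ('a, 'b) monoid_scheme \<Rightarrow> enat" where
  "s_le m G = (let P = (\<lambda>l. \<forall>S. is_seq G S \<and> size S \<ge> l \<longrightarrow>
       (\<exists>T. T \<subseteq># S \<and> T \<noteq> {#} \<and> size T \<le> m \<and> zero_sum G T))
     in if (\<exists>l. P l) then enat (LEAST l. P l) else \<infinity>)"

end

theory Submission
  imports Defs
begin

text \<open>Attach the generator of \<open>C\<^sub>n\<close> to every term of a long sequence over \<open>G\<close>: a zero-sum
  subsequence of the lifted sequence projects to a zero-sum subsequence \<open>T\<close> over \<open>G\<close> whose
  length is a multiple of \<open>n\<close>, and we may take \<open>|T| \<le> D(G \<oplus> C\<^sub>n)\<close>. If \<open>|T| \<le> \<lfloor>D(G)/n\<rfloor>n\<close> we are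
  done. Otherwise \<open>|T| > D(G)\<close>, so \<open>T\<close> minus one term still contains a non-empty zero-sum \<open>U\<close>;
  then \<open>U\<close> and \<open>T - U\<close> are both non-empty zero-sum, and the shorter one has length at most
  \<open>\<lfloor>|T|/2\<rfloor> \<le> \<lfloor>\<lfloor>D(G \<oplus> C\<^sub>n)/n\<rfloor>n/2\<rfloor>\<close>.\<close>

context comm_monoid
begin

lemma seq_prod_eq_finprod_superset:
  assumes "finite A" "set_mset S \<subseteq> A" "A \<subseteq> carrier G"
  shows "seq_prod G S = (\<Otimes>x\<in>A. x [^] count S x)"
  unfolding seq_prod_def
  using assms by (intro finprod_mono_neutral_cong_left) (auto simp: not_in_iff)

lemma seq_prod_closed:
  "set_mset S \<subseteq> carrier G \<Longrightarrow> seq_prod G S \<in> carrier G"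
  unfolding seq_prod_def by (intro finprod_closed) auto

lemma seq_prod_empty [simp]: "seq_prod G {#} = \<one>"
  by (simp add: seq_prod_def)

lemma seq_prod_singleton [simp]: "x \<in> carrier G \<Longrightarrow> seq_prod G {#x#} = x"
  by (simp add: seq_prod_def)

lemma seq_prod_union:
  assumes "set_mset S \<subseteq> carrier G" "set_mset T \<subseteq> carrier G"
  shows "seq_prod G (S + T) = seq_prod G S \<otimes> seq_prod G T"
proof -
  let ?A = "set_mset S \<union> set_mset T"
  have "seq_prod G (S + T) = (\<Otimes>x\<in>?A. x [^] count S x \<otimes> x [^] count T x)"
    using assms by (subst seq_prod_eq_finprod_superset[of ?A])
      (auto intro!: finprod_cong' simp: nat_pow_mult)
  also have "\<dots> = seq_prod G S \<otimes> seq_prod G T"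
    using assms by (subst (1 2) seq_prod_eq_finprod_superset[of ?A])
      (auto intro!: finprod_multf)
  finally show ?thesis .
qed

lemma seq_prod_add_mset:
  "\<lbrakk>x \<in> carrier G; set_mset S \<subseteq> carrier G\<rbrakk> \<Longrightarrow> seq_prod G (add_mset x S) = x \<otimes> seq_prod G S"
  using seq_prod_union[of "{#x#}" S] by simp

lemma seq_prod_replicate_mset [simp]:
  "x \<in> carrier G \<Longrightarrow> seq_prod G (replicate_mset k x) = x [^] k"
  by (induction k) (simp_all add: seq_prod_add_mset nat_pow_Suc2 m_comm)

end

lemma comm_monoid_DirProd:
  assumes "comm_monoid G" "comm_monoid H"
  shows "comm_monoid (G \<times>\<times> H)"
  using assms by (intro monoid.monoid_comm_monoidI DirProd_monoid)
    (auto simp: comm_monoid.axioms(1) mult_DirProd' comm_monoid.m_comm)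

lemma comm_group_DirProd:
  assumes "comm_group G" "comm_group H"
  shows "comm_group (G \<times>\<times> H)"
  using assms by (intro comm_group.intro comm_monoid_DirProd DirProd_group)
    (auto simp: comm_group.axioms)

lemma seq_prod_DirProd:
  assumes "comm_monoid G" "comm_monoid H" "set_mset S \<subseteq> carrier (G \<times>\<times> H)"
  shows "seq_prod (G \<times>\<times> H) S = (seq_prod G (image_mset fst S), seq_prod H (image_mset snd S))"
  using assms(3)
proof (induction S)
  case empty
  then show ?case using assms(1,2) by (simp add: comm_monoid.seq_prod_empty comm_monoid_DirProd)
next
  case (add x S)
  then have "fst x \<in> carrier G" "set_mset (image_mset fst S) \<subseteq> carrier G"
    "snd x \<in> carrier H" "set_mset (image_mset snd S) \<subseteq> carrier H"
    "x \<in> carrier (G \<times>\<times> H)" "set_mset S \<subseteq> carrier (G \<times>\<times> H)"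
    by auto
  with add show ?case
    by (simp add: comm_monoid.seq_prod_add_mset assms(1,2) comm_monoid_DirProd mult_DirProd')
qed

lemma is_seq_subset_mset: "\<lbrakk>is_seq G S; T \<subseteq># S\<rbrakk> \<Longrightarrow> is_seq G T"
  unfolding is_seq_def by (auto dest: mset_subset_eqD)

lemma (in comm_group) zero_sum_diff:
  assumes "is_seq G S" "T \<subseteq># S" "zero_sum G S" "zero_sum G T"
  shows "zero_sum G (S - T)"
proof -
  have "set_mset T \<subseteq> carrier G" "set_mset (S - T) \<subseteq> carrier G"
    using assms(1,2) unfolding is_seq_def by (auto dest: mset_subset_eqD in_diffD)
  moreover have "seq_prod G S = seq_prod G T \<otimes> seq_prod G (S - T)"
    using assms(2) seq_prod_union[OF calculation] by (simp add: subset_mset.add_diff_inverse)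
  ultimately show ?thesis
    using assms(3,4) seq_prod_closed by (simp add: zero_sum_def)
qed

lemma (in comm_group) zero_sum_subseq_if_card_le:
  assumes "finite (carrier G)" "is_seq G S" "card (carrier G) \<le> size S"
  shows "\<exists>T. T \<subseteq># S \<and> T \<noteq> {#} \<and> zero_sum G T"
proof -
  obtain xs where xs: "mset xs = S" using ex_mset by blast
  have xs_carrier: "set xs \<subseteq> carrier G" using assms(2) xs by (auto simp: is_seq_def)
  define N where "N = card (carrier G)"
  define p where "p i = seq_prod G (mset (take i xs))" for i
  have p_carrier: "p i \<in> carrier G" for i
    unfolding p_def using xs_carrier by (simp add: seq_prod_closed order.trans[OF set_take_subset])
  have "\<not> inj_on p {..N}"
  proof
    assume "inj_on p {..N}"
    moreover have "card (p ` {..N}) \<le> N"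
      unfolding N_def using assms(1) p_carrier by (intro card_mono) auto
    ultimately show False by (simp add: card_image)
  qed
  then obtain i j where ij: "i \<le> N" "j \<le> N" "i \<noteq> j" "p i = p j"
    unfolding inj_on_def by auto
  obtain a b where ab: "a < b" "b \<le> N" "p a = p b"
  proof (cases "i < j")
    case True
    then show ?thesis using ij that by blast
  next
    case False
    then show ?thesis using ij that[of j i] by simp
  qed
  define T where "T = mset (drop a (take b xs))"
  have "take b xs = take a xs @ drop a (take b xs)"
    using ab by (metis append_take_drop_id min.absorb1 less_imp_le take_take)
  then have prefix_b: "mset (take b xs) = mset (take a xs) + T"
    unfolding T_def by (metis mset_append)
  have T_carrier: "set_mset T \<subseteq> carrier G"
    unfolding T_def using xs_carrier
    by (simp add: order.trans[OF set_drop_subset] order.trans[OF set_take_subset])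
  have "p a \<otimes> seq_prod G T = p b"
    unfolding p_def prefix_b using xs_carrier T_carrier
    by (simp add: seq_prod_union order.trans[OF set_take_subset])
  then have "zero_sum G T"
    using ab(3) p_carrier seq_prod_closed[OF T_carrier] by (simp add: zero_sum_def)
  moreover have "T \<noteq> {#}"
  proof -
    have "b \<le> length xs" using ab(2) assms(3) xs N_def by auto
    then show ?thesis using ab(1) by (simp add: T_def flip: size_eq_0_iff_empty)
  qed
  moreover have "T \<subseteq># S"
  proof -
    have "mset (take b xs) \<subseteq># S"
      unfolding xs[symmetric] by (metis append_take_drop_id mset_append mset_subset_eq_add_left)
    then show ?thesis using prefix_b by (metis mset_subset_eq_add_right subset_mset.order_trans)
  qed
  ultimately show ?thesis by blast
qed

lemma (in comm_group) zero_sum_subseq_if_davenport_le: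
  assumes "finite (carrier G)" "is_seq G S" "davenport G \<le> size S"
  shows "\<exists>T. T \<subseteq># S \<and> T \<noteq> {#} \<and> zero_sum G T"
proof -
  let ?P = "\<lambda>l. \<forall>S. is_seq G S \<and> size S \<ge> l \<longrightarrow> (\<exists>T. T \<subseteq># S \<and> T \<noteq> {#} \<and> zero_sum G T)"
  have "?P (card (carrier G))" using zero_sum_subseq_if_card_le[OF assms(1)] by blast
  then have "?P (davenport G)" unfolding davenport_def by (rule LeastI)
  then show ?thesis using assms(2,3) by blast
qed

lemma (in comm_group) zero_sum_subseq_size_le_half:
  assumes "finite (carrier G)" "is_seq G S" "zero_sum G S" "davenport G < size S"
  shows "\<exists>T. T \<subseteq># S \<and> T \<noteq> {#} \<and> size T \<le> size S div 2 \<and> zero_sum G T"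
proof -
  obtain x where "x \<in># S" using assms(4) by fastforce
  define R where "R = S - {#x#}"
  have "R \<subseteq># S" "davenport G \<le> size R"
    using assms(4) \<open>x \<in># S\<close> by (auto simp: R_def size_Diff_singleton)
  moreover have "is_seq G R" using assms(2) \<open>R \<subseteq># S\<close> by (rule is_seq_subset_mset)
  ultimately obtain U where U: "U \<subseteq># R" "U \<noteq> {#}" "zero_sum G U"
    using zero_sum_subseq_if_davenport_le[OF assms(1)] by blast
  have "U \<subseteq># S" using U(1) \<open>R \<subseteq># S\<close> by (rule subset_mset.order_trans)
  have "size U < size S"
    using size_mset_mono[OF U(1)] \<open>x \<in># S\<close> assms(4) by (simp add: R_def size_Diff_singleton)
  define V where "V = S - U"
  have V_size: "size V = size S - size U"
    using \<open>U \<subseteq># S\<close> by (simp add: V_def size_Diff_submset)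
  have V: "V \<subseteq># S" "zero_sum G V" "V \<noteq> {#}"
    using zero_sum_diff[OF assms(2) \<open>U \<subseteq># S\<close> assms(3) U(3)] V_size \<open>size U < size S\<close>
    by (auto simp: V_def)
  show ?thesis
  proof (cases "size U \<le> size S div 2")
    case True
    then show ?thesis using \<open>U \<subseteq># S\<close> U(2,3) by blast
  next
    case False
    then have "size V \<le> size S div 2" using V_size by simp
    then show ?thesis using V(1-3) by blast
  qed
qed

lemma dvd_le_imp_le_div_mult:
  fixes k d n :: nat
  assumes "n dvd k" "k \<le> d"
  shows "k \<le> d div n * n"
  using assms by (metis div_le_mono dvd_div_mult_self mult_le_mono1)

lemma dvd_gt_div_mult_imp_gt:
  fixes k d n :: nat
  assumes "n > 0" "n dvd k" "d div n * n < k"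
  shows "d < k"
proof -
  have "d div n < k div n" using assms(2,3) by (metis dvd_div_mult_self mult_less_cancel2)
  then have "(d div n + 1) * n \<le> k"
    using assms(2) by (metis Suc_eq_plus1 Suc_leI dvd_div_mult_self mult_le_mono1)
  moreover have "d < (d div n + 1) * n" using assms(1) by (simp add: dividend_less_div_times)
  ultimately show ?thesis by linarith
qed

lemma (in comm_group) zero_sum_subseq_size_le_max:
  assumes "finite (carrier G)" "n > 0" "is_seq G S" "zero_sum G S" "S \<noteq> {#}"
    and "n dvd size S" "size S \<le> D"
  shows "\<exists>T. T \<subseteq># S \<and> T \<noteq> {#} \<and> size T \<le> max (D div n * n div 2) (davenport G div n * n)
           \<and> zero_sum G T"
proof (cases "size S \<le> davenport G div n * n")
  case True
  then show ?thesis using assms(4,5) by auto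
next
  case False
  then have "davenport G < size S"
    using dvd_gt_div_mult_imp_gt[OF assms(2,6)] by simp
  then obtain T where "T \<subseteq># S" "T \<noteq> {#}" "size T \<le> size S div 2" "zero_sum G T"
    using zero_sum_subseq_size_le_half[OF assms(1,3,4)] by blast
  moreover have "size S div 2 \<le> D div n * n div 2"
    using dvd_le_imp_le_div_mult[OF assms(6,7)] by (rule div_le_mono)
  ultimately show ?thesis by force
qed

lemma (in comm_group) zero_sum_subseq_size_dvd:
  assumes "finite (carrier G)" "n > 0" "is_seq G S"
    and "davenport (G \<times>\<times> integer_mod_group n) \<le> size S"
  shows "\<exists>T. T \<subseteq># S \<and> T \<noteq> {#} \<and> n dvd size T \<and> zero_sum G T"
proof -
  define Z where "Z = integer_mod_group n"
  define c where "c = 1 mod int n" \<comment> \<open>not \<open>1\<close>, which lies outside the carrier \<open>{0}\<close> when \<open>n = 1\<close>\<close>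
  have c: "c \<in> carrier Z" using assms(2) by (simp add: Z_def c_def carrier_integer_mod_group)
  have H: "comm_group (G \<times>\<times> Z)" "finite (carrier (G \<times>\<times> Z))"
    using comm_group_axioms assms(1,2)
    by (auto simp: Z_def comm_group_DirProd carrier_integer_mod_group)
  define S' where "S' = image_mset (\<lambda>g. (g, c)) S"
  have "is_seq (G \<times>\<times> Z) S'" using assms(3) c by (auto simp: S'_def is_seq_def)
  moreover have "davenport (G \<times>\<times> Z) \<le> size S'" using assms(4) by (simp add: S'_def Z_def)
  ultimately obtain T' where T': "T' \<subseteq># S'" "T' \<noteq> {#}" "zero_sum (G \<times>\<times> Z) T'"
    using comm_group.zero_sum_subseq_if_davenport_le[OF H] by blast
  define T where "T = image_mset fst T'"
  have "T \<subseteq># S"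
    using image_mset_subseteq_mono[OF T'(1), of fst]
    by (simp add: T_def S'_def image_mset.compositionality o_def)
  have "image_mset snd T' = image_mset (\<lambda>_. c) T'"
    using T'(1) by (intro image_mset_cong) (auto simp: S'_def dest: mset_subset_eqD)
  then have "image_mset snd T' = replicate_mset (size T) c"
    by (simp add: T_def image_mset_const_eq)
  moreover have "set_mset T' \<subseteq> carrier (G \<times>\<times> Z)"
    using is_seq_subset_mset[OF \<open>is_seq (G \<times>\<times> Z) S'\<close> T'(1)] by (simp add: is_seq_def)
  ultimately have "seq_prod (G \<times>\<times> Z) T' = (seq_prod G T, int (size T) mod int n)"
    using c comm_group.axioms(1)[OF abelian_integer_mod_group]
    by (simp add: seq_prod_DirProd comm_monoid_axioms comm_monoid.seq_prod_replicate_mset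
        T_def Z_def c_def mod_mult_right_eq)
  then have "zero_sum G T" "int (size T) mod int n = 0"
    using T'(3) by (simp_all add: zero_sum_def Z_def)
  moreover have "T \<noteq> {#}" using T'(2) by (simp add: T_def)
  ultimately show ?thesis using \<open>T \<subseteq># S\<close> by (auto simp flip: of_nat_mod)
qed

lemma exists_subset_mset_of_size:
  assumes "k \<le> size S"
  shows "\<exists>S'. S' \<subseteq># S \<and> size S' = k"
proof -
  obtain xs where xs: "mset xs = S" using ex_mset by blast
  then have "mset (take k xs) \<subseteq># S"
    by (metis append_take_drop_id mset_append mset_subset_eq_add_left)
  moreover have "size (mset (take k xs)) = k" using assms xs by auto
  ultimately show ?thesis by blast
qed

lemma s_le_le_enat:
  assumes "\<And>S. is_seq G S \<Longrightarrow> l \<le> size S \<Longrightarrow>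
             \<exists>T. T \<subseteq># S \<and> T \<noteq> {#} \<and> size T \<le> m \<and> zero_sum G T"
  shows "s_le m G \<le> enat l"
proof -
  let ?P = "\<lambda>l. \<forall>S. is_seq G S \<and> l \<le> size S \<longrightarrow>
             (\<exists>T. T \<subseteq># S \<and> T \<noteq> {#} \<and> size T \<le> m \<and> zero_sum G T)"
  have "?P l" using assms by blast
  then have "\<exists>l. ?P l" by blast
  then have "s_le m G = enat (LEAST l. ?P l)" unfolding s_le_def Let_def by simp
  also have "\<dots> \<le> enat l" using \<open>?P l\<close> by (simp add: Least_le)
  finally show ?thesis .
qed

theorem lemma3p4:
  fixes G :: "('a, 'b) monoid_scheme" and n :: nat
  assumes "comm_group G" and "finite (carrier G)" and "n \<ge> 1"
  shows "s_le (max (((davenport (G \<times>\<times> integer_mod_group n) div n) * n) div 2)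
                   ((davenport G div n) * n)) G
         \<le> enat (davenport (G \<times>\<times> integer_mod_group n))"
proof (rule s_le_le_enat)
  interpret comm_group G by fact
  have "n > 0" using assms(3) by simp
  define D where "D = davenport (G \<times>\<times> integer_mod_group n)"
  fix S assume "is_seq G S" "D \<le> size S"
  then obtain S' where S': "S' \<subseteq># S" "size S' = D" "is_seq G S'"
    using exists_subset_mset_of_size is_seq_subset_mset by metis
  then obtain T where T: "T \<subseteq># S'" "T \<noteq> {#}" "n dvd size T" "zero_sum G T"
    using zero_sum_subseq_size_dvd[OF assms(2) \<open>n > 0\<close> S'(3)] S'(2) D_def by auto
  moreover have "is_seq G T" "size T \<le> D"
    using is_seq_subset_mset[OF S'(3) T(1)] size_mset_mono[OF T(1)] S'(2) by auto
  ultimately obtain U where "U \<subseteq># T" "U \<noteq> {#}" "zero_sum G U"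
    "size U \<le> max (D div n * n div 2) (davenport G div n * n)"
    using zero_sum_subseq_size_le_max[OF assms(2) \<open>n > 0\<close>] by blast
  then show "\<exists>U. U \<subseteq># S \<and> U \<noteq> {#}
      \<and> size U \<le> max (D div n * n div 2) (davenport G div n * n) \<and> zero_sum G U"
    using T(1) S'(1) by (meson subset_mset.order_trans)
qed

end
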